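(* Let $A$ be a distributive meet-complemented lattice in which $\Box x$ and $\Diamond x$ exist for every $x\in A$ and such that $\Box a\le\Box\Box a$ for all $a\in A$. Then for every $a\in A$: (i) $\Diamond\neg\Box a=\neg\Box a$; (ii) $\neg\neg\Diamond a\le\Diamond a$; (iii) $\neg\Box\neg a\le\Diamond a$; (iv) $\Diamond a=\neg\Box\neg a$.
   Context: A meet-complemented lattice is a lattice $(L,\le)$ such that for every $a\in L$ the element $\neg a=\max\{b\in L: a\wedge b\le c\ \text{for all } c\in L\}$ exists; it is bounded with bottom $0$ and top $1$. For $a\in L$, $\Box a=\max\{b\in L: a\vee\neg b=1\}$ and $\Diamond a=\min\{b\in L: \neg a\vee b=1\}$. *)

theory Defs
  imports Main
begin

definition has_greatest :: "('a::order \<Rightarrow> bool) \<Rightarrow> bool" where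
  "has_greatest P \<longleftrightarrow> (\<exists>x. P x \<and> (\<forall>y. P y \<longrightarrow> y \<le> x))"

definition has_least :: "('a::order \<Rightarrow> bool) \<Rightarrow> bool" where
  "has_least P \<longleftrightarrow> (\<exists>x. P x \<and> (\<forall>y. P y \<longrightarrow> x \<le> y))"

definition mc_neg :: "'a::bounded_lattice \<Rightarrow> 'a" where
  "mc_neg a = (GREATEST b. \<forall>c. inf a b \<le> c)"

definition mc_box :: "'a::bounded_lattice \<Rightarrow> 'a" where
  "mc_box a = (GREATEST b. sup a (mc_neg b) = top)"

definition mc_dia :: "'a::bounded_lattice \<Rightarrow> 'a" where
  "mc_dia a = (LEAST b. sup (mc_neg a) b = top)"

end

theory Submission
  imports Defs
begin

text \<open>Meet-complement, box and diamond are characterised by adjunction-like equivalences: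
  \<open>b \<le> \<not>a \<longleftrightarrow> a \<sqinter> b = 0\<close>, \<open>b \<le> \<box>a \<longleftrightarrow> a \<squnion> \<not>b = 1\<close> and \<open>\<diamond>a \<le> b \<longleftrightarrow> \<not>a \<squnion> b = 1\<close>, so
  \<open>\<diamond>\<close> is left adjoint to \<open>\<box>\<close>, and in a distributive lattice \<open>\<box>a \<le> a\<close>.
  Every complemented element \<open>c\<close> (i.e. \<open>c \<squnion> \<not>c = 1\<close>) satisfies \<open>\<diamond>c = c\<close> and \<open>\<not>\<not>c \<le> c\<close>,
  and \<open>\<not>c\<close> is complemented as well. The hypothesis \<open>\<box>a \<le> \<box>\<box>a\<close> makes every \<open>\<box>a\<close>
  complemented, and it gives \<open>\<diamond>a = \<box>\<diamond>a\<close>; this yields (i) and (ii). Finally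
  \<open>\<diamond>a \<le> \<not>\<box>\<not>a\<close> is the defining property of \<open>\<box>\<not>a\<close>, and the converse follows from
  \<open>\<not>\<diamond>a \<le> \<box>\<not>a\<close> by antitonicity of \<open>\<not>\<close> and (ii).\<close>

lemma has_greatest_Greatest:
  assumes "has_greatest P"
  shows has_greatest_GreatestI: "P (Greatest P)"
    and has_greatest_Greatest_upper: "P y \<Longrightarrow> y \<le> Greatest P"
proof -
  obtain x where x: "P x" "\<forall>y. P y \<longrightarrow> y \<le> x"
    using assms unfolding has_greatest_def by blast
  then have "Greatest P = x" by (simp add: Greatest_equality)
  with x show "P (Greatest P)" and "P y \<Longrightarrow> y \<le> Greatest P" by simp_all
qed

lemma has_least_Least:
  assumes "has_least P"
  shows has_least_LeastI: "P (Least P)"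
    and has_least_Least_lower: "P y \<Longrightarrow> Least P \<le> y"
proof -
  obtain x where x: "P x" "\<forall>y. P y \<longrightarrow> x \<le> y"
    using assms unfolding has_least_def by blast
  then have "Least P = x" by (simp add: Least_equality)
  with x show "P (Least P)" and "P y \<Longrightarrow> Least P \<le> y" by simp_all
qed

lemma sup_eq_top_mono_right:
  fixes x y z :: "'a::bounded_lattice"
  shows "sup x y = top \<Longrightarrow> y \<le> z \<Longrightarrow> sup x z = top"
  by (metis sup.mono order_refl top_unique)

lemma le_mc_neg_iff:
  fixes a :: "'a::bounded_lattice"
  assumes neg_ex: "has_greatest (\<lambda>b. \<forall>c. inf a b \<le> c)"
  shows "b \<le> mc_neg a \<longleftrightarrow> inf a b = bot"
proof
  have "\<forall>c. inf a (mc_neg a) \<le> c"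
    using has_greatest_GreatestI[OF neg_ex] by (simp add: mc_neg_def)
  then have "inf a (mc_neg a) = bot" using bot_unique by blast
  moreover assume "b \<le> mc_neg a"
  ultimately show "inf a b = bot" by (metis inf_mono order_refl bot_unique)
next
  assume "inf a b = bot"
  then show "b \<le> mc_neg a"
    unfolding mc_neg_def by (simp add: has_greatest_Greatest_upper[OF neg_ex])
qed

lemma inf_mc_neg:
  fixes a :: "'a::bounded_lattice"
  assumes "has_greatest (\<lambda>b. \<forall>c. inf a b \<le> c)"
  shows "inf a (mc_neg a) = bot"
  using le_mc_neg_iff[OF assms, of "mc_neg a"] by simp

lemma mc_neg_antimono:
  fixes x y :: "'a::bounded_lattice"
  assumes neg_ex: "\<And>a::'a. has_greatest (\<lambda>b. \<forall>c. inf a b \<le> c)"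
    and "x \<le> y"
  shows "mc_neg y \<le> mc_neg x"
proof -
  have "inf x (mc_neg y) \<le> inf y (mc_neg y)" using \<open>x \<le> y\<close> by (simp add: le_infI1)
  then show ?thesis by (simp add: le_mc_neg_iff[OF neg_ex] inf_mc_neg[OF neg_ex] bot_unique)
qed

lemma le_mc_neg_mc_neg:
  fixes x :: "'a::bounded_lattice"
  assumes neg_ex: "\<And>a::'a. has_greatest (\<lambda>b. \<forall>c. inf a b \<le> c)"
  shows "x \<le> mc_neg (mc_neg x)"
  using inf_mc_neg[OF neg_ex, of x] by (simp add: le_mc_neg_iff[OF neg_ex] inf_commute)

lemma mc_neg_mc_neg_le_if_complemented:
  fixes c :: "'a::{distrib_lattice, bounded_lattice}"
  assumes neg_ex: "\<And>a::'a. has_greatest (\<lambda>b. \<forall>c. inf a b \<le> c)"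
    and compl: "sup c (mc_neg c) = top"
  shows "mc_neg (mc_neg c) \<le> c"
proof -
  have "mc_neg (mc_neg c) = inf (mc_neg (mc_neg c)) (sup c (mc_neg c))"
    using compl by simp
  also have "\<dots> = sup (inf (mc_neg (mc_neg c)) c) (inf (mc_neg (mc_neg c)) (mc_neg c))"
    by (rule inf_sup_distrib1)
  also have "\<dots> = inf (mc_neg (mc_neg c)) c"
    using inf_mc_neg[OF neg_ex, of "mc_neg c"] by (simp add: inf_commute)
  finally show ?thesis by (metis inf.cobounded2)
qed

lemma mc_neg_complemented:
  fixes c :: "'a::bounded_lattice"
  assumes neg_ex: "\<And>a::'a. has_greatest (\<lambda>b. \<forall>c. inf a b \<le> c)"
    and compl: "sup c (mc_neg c) = top"
  shows "sup (mc_neg c) (mc_neg (mc_neg c)) = top"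
  using compl le_mc_neg_mc_neg[OF neg_ex, of c]
  by (simp add: sup_commute sup_eq_top_mono_right)

lemma sup_mc_neg_mc_box:
  fixes a :: "'a::bounded_lattice"
  assumes box_ex: "has_greatest (\<lambda>b. sup a (mc_neg b) = top)"
  shows "sup a (mc_neg (mc_box a)) = top"
  using has_greatest_GreatestI[OF box_ex] by (simp add: mc_box_def)

lemma le_mc_box_iff:
  fixes a :: "'a::bounded_lattice"
  assumes neg_ex: "\<And>a::'a. has_greatest (\<lambda>b. \<forall>c. inf a b \<le> c)"
    and box_ex: "has_greatest (\<lambda>b. sup a (mc_neg b) = top)"
  shows "b \<le> mc_box a \<longleftrightarrow> sup a (mc_neg b) = top"
proof
  assume "b \<le> mc_box a"
  then have "mc_neg (mc_box a) \<le> mc_neg b" by (rule mc_neg_antimono[OF neg_ex])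
  then show "sup a (mc_neg b) = top"
    by (rule sup_eq_top_mono_right[OF sup_mc_neg_mc_box[OF box_ex]])
next
  assume "sup a (mc_neg b) = top"
  then show "b \<le> mc_box a"
    unfolding mc_box_def by (rule has_greatest_Greatest_upper[OF box_ex])
qed

lemma mc_box_le:
  fixes a :: "'a::{distrib_lattice, bounded_lattice}"
  assumes neg_ex: "\<And>a::'a. has_greatest (\<lambda>b. \<forall>c. inf a b \<le> c)"
    and box_ex: "has_greatest (\<lambda>b. sup a (mc_neg b) = top)"
  shows "mc_box a \<le> a"
proof -
  have "mc_box a = inf (mc_box a) (sup a (mc_neg (mc_box a)))"
    using sup_mc_neg_mc_box[OF box_ex] by simp
  also have "\<dots> = sup (inf (mc_box a) a) (inf (mc_box a) (mc_neg (mc_box a)))"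
    by (rule inf_sup_distrib1)
  also have "\<dots> = inf (mc_box a) a" by (simp add: inf_mc_neg[OF neg_ex])
  finally show ?thesis by (metis inf.cobounded2)
qed

lemma sup_mc_neg_mc_dia:
  fixes a :: "'a::bounded_lattice"
  assumes dia_ex: "has_least (\<lambda>b. sup (mc_neg a) b = top)"
  shows "sup (mc_neg a) (mc_dia a) = top"
  using has_least_LeastI[OF dia_ex] by (simp add: mc_dia_def)

lemma mc_dia_le_iff:
  fixes a :: "'a::bounded_lattice"
  assumes dia_ex: "has_least (\<lambda>b. sup (mc_neg a) b = top)"
  shows "mc_dia a \<le> b \<longleftrightarrow> sup (mc_neg a) b = top"
proof
  assume "mc_dia a \<le> b"
  then show "sup (mc_neg a) b = top"
    by (rule sup_eq_top_mono_right[OF sup_mc_neg_mc_dia[OF dia_ex]])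
next
  assume "sup (mc_neg a) b = top"
  then show "mc_dia a \<le> b"
    unfolding mc_dia_def by (rule has_least_Least_lower[OF dia_ex])
qed

lemma mc_dia_le_iff_le_mc_box:
  fixes a :: "'a::bounded_lattice"
  assumes neg_ex: "\<And>a::'a. has_greatest (\<lambda>b. \<forall>c. inf a b \<le> c)"
    and box_ex: "has_greatest (\<lambda>x. sup b (mc_neg x) = top)"
    and dia_ex: "has_least (\<lambda>x. sup (mc_neg a) x = top)"
  shows "mc_dia a \<le> b \<longleftrightarrow> a \<le> mc_box b"
  by (simp add: mc_dia_le_iff[OF dia_ex] le_mc_box_iff[OF neg_ex box_ex] sup_commute)

lemma mc_dia_complemented:
  fixes c :: "'a::{distrib_lattice, bounded_lattice}"
  assumes neg_ex: "\<And>a::'a. has_greatest (\<lambda>b. \<forall>c. inf a b \<le> c)"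
    and box_ex: "\<And>a::'a. has_greatest (\<lambda>b. sup a (mc_neg b) = top)"
    and dia_ex: "has_least (\<lambda>b. sup (mc_neg c) b = top)"
    and compl: "sup c (mc_neg c) = top"
  shows "mc_dia c = c"
proof (rule antisym)
  show "mc_dia c \<le> c"
    using compl by (simp add: mc_dia_le_iff[OF dia_ex] sup_commute)
  have "c \<le> mc_box (mc_dia c)"
    by (simp flip: mc_dia_le_iff_le_mc_box[OF neg_ex box_ex dia_ex])
  then show "c \<le> mc_dia c" using mc_box_le[OF neg_ex box_ex] by (rule order_trans)
qed

lemma mc_box_complemented:
  fixes a :: "'a::bounded_lattice"
  assumes neg_ex: "\<And>a::'a. has_greatest (\<lambda>b. \<forall>c. inf a b \<le> c)"
    and box_ex: "has_greatest (\<lambda>b. sup (mc_box a) (mc_neg b) = top)"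
    and box4: "mc_box a \<le> mc_box (mc_box a)"
  shows "sup (mc_box a) (mc_neg (mc_box a)) = top"
  using box4 by (simp flip: le_mc_box_iff[OF neg_ex box_ex])

lemma mc_box_mc_dia:
  fixes a :: "'a::{distrib_lattice, bounded_lattice}"
  assumes neg_ex: "\<And>a::'a. has_greatest (\<lambda>b. \<forall>c. inf a b \<le> c)"
    and box_ex: "\<And>a::'a. has_greatest (\<lambda>b. sup a (mc_neg b) = top)"
    and dia_ex: "has_least (\<lambda>b. sup (mc_neg a) b = top)"
    and box4: "\<And>a::'a. mc_box a \<le> mc_box (mc_box a)"
  shows "mc_box (mc_dia a) = mc_dia a"
proof (rule antisym)
  show "mc_box (mc_dia a) \<le> mc_dia a" by (rule mc_box_le[OF neg_ex box_ex])
  have "a \<le> mc_box (mc_dia a)"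
    by (simp flip: mc_dia_le_iff_le_mc_box[OF neg_ex box_ex dia_ex])
  then have "a \<le> mc_box (mc_box (mc_dia a))" using box4 by (rule order_trans)
  then show "mc_dia a \<le> mc_box (mc_dia a)"
    by (simp add: mc_dia_le_iff_le_mc_box[OF neg_ex box_ex dia_ex])
qed

lemma mc_dia_le_mc_neg_mc_box_mc_neg:
  fixes a :: "'a::bounded_lattice"
  assumes box_ex: "has_greatest (\<lambda>b. sup (mc_neg a) (mc_neg b) = top)"
    and dia_ex: "has_least (\<lambda>b. sup (mc_neg a) b = top)"
  shows "mc_dia a \<le> mc_neg (mc_box (mc_neg a))"
  by (simp add: mc_dia_le_iff[OF dia_ex] sup_mc_neg_mc_box[OF box_ex])

lemma mc_dia_mc_neg_mc_box:
  fixes a :: "'a::{distrib_lattice, bounded_lattice}"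
  assumes neg_ex: "\<And>a::'a. has_greatest (\<lambda>b. \<forall>c. inf a b \<le> c)"
    and box_ex: "\<And>a::'a. has_greatest (\<lambda>b. sup a (mc_neg b) = top)"
    and dia_ex: "\<And>a::'a. has_least (\<lambda>b. sup (mc_neg a) b = top)"
    and box4: "mc_box a \<le> mc_box (mc_box a)"
  shows "mc_dia (mc_neg (mc_box a)) = mc_neg (mc_box a)"
  using mc_neg_complemented[OF neg_ex mc_box_complemented[OF neg_ex box_ex box4]]
  by (rule mc_dia_complemented[OF neg_ex box_ex dia_ex])

lemma mc_neg_mc_neg_mc_dia_le:
  fixes a :: "'a::{distrib_lattice, bounded_lattice}"
  assumes neg_ex: "\<And>a::'a. has_greatest (\<lambda>b. \<forall>c. inf a b \<le> c)"
    and box_ex: "\<And>a::'a. has_greatest (\<lambda>b. sup a (mc_neg b) = top)"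
    and dia_ex: "has_least (\<lambda>b. sup (mc_neg a) b = top)"
    and box4: "\<And>a::'a. mc_box a \<le> mc_box (mc_box a)"
  shows "mc_neg (mc_neg (mc_dia a)) \<le> mc_dia a"
proof -
  have "sup (mc_dia a) (mc_neg (mc_dia a)) = top"
    using mc_box_complemented[OF neg_ex box_ex box4, of "mc_dia a"]
    unfolding mc_box_mc_dia[OF neg_ex box_ex dia_ex box4] .
  then show ?thesis by (rule mc_neg_mc_neg_le_if_complemented[OF neg_ex])
qed

lemma mc_neg_mc_box_mc_neg_le_mc_dia:
  fixes a :: "'a::{distrib_lattice, bounded_lattice}"
  assumes neg_ex: "\<And>a::'a. has_greatest (\<lambda>b. \<forall>c. inf a b \<le> c)"
    and box_ex: "\<And>a::'a. has_greatest (\<lambda>b. sup a (mc_neg b) = top)"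
    and dia_ex: "has_least (\<lambda>b. sup (mc_neg a) b = top)"
    and box4: "\<And>a::'a. mc_box a \<le> mc_box (mc_box a)"
  shows "mc_neg (mc_box (mc_neg a)) \<le> mc_dia a"
proof -
  have "sup (mc_neg a) (mc_neg (mc_neg (mc_dia a))) = top"
    using sup_mc_neg_mc_dia[OF dia_ex] le_mc_neg_mc_neg[OF neg_ex] by (rule sup_eq_top_mono_right)
  then have "mc_neg (mc_dia a) \<le> mc_box (mc_neg a)"
    by (simp add: le_mc_box_iff[OF neg_ex box_ex])
  then have "mc_neg (mc_box (mc_neg a)) \<le> mc_neg (mc_neg (mc_dia a))"
    by (rule mc_neg_antimono[OF neg_ex])
  also have "\<dots> \<le> mc_dia a" by (rule mc_neg_mc_neg_mc_dia_le[OF neg_ex box_ex dia_ex box4])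
  finally show ?thesis .
qed

theorem proposition23:
  fixes dummy :: "'a::{distrib_lattice, bounded_lattice}"
  assumes neg_ex: "\<And>a::'a. has_greatest (\<lambda>b. \<forall>c. inf a b \<le> c)"
    and box_ex: "\<And>a::'a. has_greatest (\<lambda>b. sup a (mc_neg b) = top)"
    and dia_ex: "\<And>a::'a. has_least (\<lambda>b. sup (mc_neg a) b = top)"
    and box4: "\<And>a::'a. mc_box a \<le> mc_box (mc_box a)"
  shows "\<forall>a::'a. mc_dia (mc_neg (mc_box a)) = mc_neg (mc_box a)
           \<and> mc_neg (mc_neg (mc_dia a)) \<le> mc_dia a
           \<and> mc_neg (mc_box (mc_neg a)) \<le> mc_dia a
           \<and> mc_dia a = mc_neg (mc_box (mc_neg a))"
  using mc_dia_mc_neg_mc_box[OF neg_ex box_ex dia_ex box4]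
    mc_neg_mc_neg_mc_dia_le[OF neg_ex box_ex dia_ex box4]
    mc_neg_mc_box_mc_neg_le_mc_dia[OF neg_ex box_ex dia_ex box4]
    mc_dia_le_mc_neg_mc_box_mc_neg[OF box_ex dia_ex]
  by (blast intro: antisym)

end
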